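(* Let $G$ be a connected graph and let $A\subset\mathcal V(G)$ be a set of vertices such that the simple random walk started from any vertex of $G$ a.s. hits $A$ in finite time. For $x\in\mathcal V(G)$ let $X^x$ be the simple random walk started from $x$ and $\tau^x$ the first time $X^x$ hits $A$. Then for $x,y\in\mathcal V(G)\setminus A$, \[ \mathbb d_{\mathrm{TV}}\big(X^x_{\tau^x},X^y_{\tau^y}\big)\leq 1-\mathbb P\big[\text{$X^x$ disconnects $y$ from $A$ before time $\tau^x$}\big], \] where $\mathbb d_{\mathrm{TV}}$ denotes the total variation distance between the laws.
   Context: "$X^x$ disconnects $y$ from $A$ before time $\tau^x$" means that every path in $G$ from $y$ to $A$ passes through a vertex visited by $X^x$ during $[0,\tau^x]$. *)

theory Defs
  imports "HOL-Probability.Probability"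
begin

text \<open>A graph is given by a vertex set V and a symmetric, irreflexive adjacency
relation E with E u v only for u, v in V.\<close>

definition nbrs :: "('a \<Rightarrow> 'a \<Rightarrow> bool) \<Rightarrow> 'a \<Rightarrow> 'a set" where
  "nbrs E v = {w. E v w}"

text \<open>Law of the first n steps (a list of n+1 vertices) of the simple random walk
started at x: each step goes to a uniformly chosen neighbour of the current vertex.\<close>
primrec srw :: "('a \<Rightarrow> 'a \<Rightarrow> bool) \<Rightarrow> 'a \<Rightarrow> nat \<Rightarrow> 'a list pmf" where
  "srw E x 0 = return_pmf [x]"
| "srw E x (Suc n) = srw E x n \<bind>
      (\<lambda>p. map_pmf (\<lambda>v. p @ [v]) (pmf_of_set (nbrs E (last p))))"

text \<open>The trajectory p = (X_0,...,X_n) realises tau = n, i.e. n is the first time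
the walk is in A.\<close>
definition first_hit :: "'a set \<Rightarrow> 'a list \<Rightarrow> bool" where
  "first_hit A p \<longleftrightarrow> p \<noteq> [] \<and> last p \<in> A \<and> (\<forall>i < length p - 1. p ! i \<notin> A)"

text \<open>P[ tau^x < infinity and the trajectory (X_0,...,X_tau) satisfies Q ].\<close>
definition stopped_prob :: "('a \<Rightarrow> 'a \<Rightarrow> bool) \<Rightarrow> 'a set \<Rightarrow> 'a \<Rightarrow> ('a list \<Rightarrow> bool) \<Rightarrow> real" where
  "stopped_prob E A x Q = (\<Sum>n. measure_pmf.prob (srw E x n) {p. first_hit A p \<and> Q p})"

text \<open>Law of X^x_{tau^x}, evaluated on a set B of vertices.\<close>
definition hit_law :: "('a \<Rightarrow> 'a \<Rightarrow> bool) \<Rightarrow> 'a set \<Rightarrow> 'a \<Rightarrow> 'a set \<Rightarrow> real" where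
  "hit_law E A x B = stopped_prob E A x (\<lambda>p. last p \<in> B)"

definition dTV_hit :: "('a \<Rightarrow> 'a \<Rightarrow> bool) \<Rightarrow> 'a set \<Rightarrow> 'a \<Rightarrow> 'a \<Rightarrow> real" where
  "dTV_hit E A x y = (SUP B. \<bar>hit_law E A x B - hit_law E A y B\<bar>)"

definition gpath :: "('a \<Rightarrow> 'a \<Rightarrow> bool) \<Rightarrow> 'a list \<Rightarrow> bool" where
  "gpath E q \<longleftrightarrow> q \<noteq> [] \<and> (\<forall>i < length q - 1. E (q ! i) (q ! Suc i))"

definition disconnects :: "('a \<Rightarrow> 'a \<Rightarrow> bool) \<Rightarrow> 'a set \<Rightarrow> 'a \<Rightarrow> 'a set \<Rightarrow> bool" where
  "disconnects E S y A \<longleftrightarrow>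
     (\<forall>q. gpath E q \<and> hd q = y \<and> last q \<in> A \<longrightarrow> set q \<inter> S \<noteq> {})"

end

theory Submission
  imports Defs "HOL-Library.Sublist"
begin

text \<open>
  Probabilities of events of the walk are sums, over sets of paths, of walk_weight, the product
  of the transition probabilities along a path.

  Run Wilson's algorithm rooted at A from x and then from y: the first branch is the loop-erased
  walk from x to A, the second the loop-erased walk from y to A and the first branch. The first
  branch ends where X^x hits A. Lawler's formula writes the probability of the pair of branches
  with Green functions of the walk killed on the vertices already visited, and the identity
  G_K(u) G_{K+u}(v) = G_K(v) G_{K+v}(u) makes this independent of the order in which the
  vertices are added. Hence re-rooting the pair at y (tree_swap) is a weight-preserving
  bijection onto the pairs built from y and then x, and when the branches meet it keeps the
  endpoint of the first branch. So the laws of X^x_{tau^x} and X^y_{tau^y} differ by at most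
  the probability that the branches do not meet. If X^x disconnects y from A, it meets the
  loop-erased walk from y, so the branches built from y and then x meet.
\<close>

section \<open>Sums in ennreal\<close>

lemma summable_on_ennreal_complete [simp]: "(f :: 'b \<Rightarrow> ennreal) summable_on A"
  by (simp add: nonneg_summable_on_complete)

lemma infsum_cmult_right_ennreal:
  fixes f :: "'b \<Rightarrow> ennreal"
  shows "infsum (\<lambda>x. c * f x) A = c * infsum f A"
proof -
  have "infsum (\<lambda>x. c * f x) A = (SUP F\<in>{F. finite F \<and> F \<subseteq> A}. c * sum f F)"
    by (subst nonneg_infsum_complete) (simp_all add: sum_distrib_left)
  also have "\<dots> = c * infsum f A"
    by (simp add: nonneg_infsum_complete SUP_mult_left_ennreal)
  finally show ?thesis .
qed

lemma infsum_cmult_left_ennreal: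
  fixes f :: "'b \<Rightarrow> ennreal"
  shows "infsum (\<lambda>x. f x * c) A = infsum f A * c"
  using infsum_cmult_right_ennreal[of c f A] by (simp add: mult.commute)

lemma infsum_Sigma_finite_ennreal:
  fixes f :: "'b \<times> 'c \<Rightarrow> ennreal"
  assumes "finite A"
  shows "infsum f (Sigma A B) = (\<Sum>x\<in>A. infsum (\<lambda>y. f (x, y)) (B x))"
  using assms
proof (induction A rule: finite_induct)
  case (insert a A)
  have split: "Sigma (insert a A) B = Pair a ` B a \<union> Sigma A B" by auto
  have "infsum f (Sigma (insert a A) B) = infsum f (Pair a ` B a) + infsum f (Sigma A B)"
    unfolding split by (rule infsum_Un_disjoint) (use insert in auto)
  also have "infsum f (Pair a ` B a) = infsum (\<lambda>y. f (a, y)) (B a)"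
    by (subst infsum_reindex) (auto simp: inj_on_def o_def)
  finally show ?case using insert by simp
qed simp

lemma infsum_Sigma_ennreal:
  fixes f :: "'b \<times> 'c \<Rightarrow> ennreal"
  shows "infsum f (Sigma A B) = infsum (\<lambda>x. infsum (\<lambda>y. f (x, y)) (B x)) A"
proof (rule antisym)
  show "infsum f (Sigma A B) \<le> infsum (\<lambda>x. infsum (\<lambda>y. f (x, y)) (B x)) A"
  proof (rule infsum_le_finite_sums, simp)
    fix F assume F: "finite F" "F \<subseteq> Sigma A B"
    have "sum f F = infsum f F" using F by simp
    also have "\<dots> \<le> infsum f (Sigma (fst ` F) B)"
      by (rule infsum_mono_neutral) (use F in force)+
    also have "\<dots> = infsum (\<lambda>x. infsum (\<lambda>y. f (x, y)) (B x)) (fst ` F)"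
      using F by (simp add: infsum_Sigma_finite_ennreal)
    also have "\<dots> \<le> infsum (\<lambda>x. infsum (\<lambda>y. f (x, y)) (B x)) A"
      by (rule infsum_mono_neutral) (use F in force)+
    finally show "sum f F \<le> infsum (\<lambda>x. infsum (\<lambda>y. f (x, y)) (B x)) A" .
  qed
next
  show "infsum (\<lambda>x. infsum (\<lambda>y. f (x, y)) (B x)) A \<le> infsum f (Sigma A B)"
  proof (rule infsum_le_finite_sums, simp)
    fix F assume F: "finite F" "F \<subseteq> A"
    have "(\<Sum>x\<in>F. infsum (\<lambda>y. f (x, y)) (B x)) = infsum f (Sigma F B)"
      using F by (simp add: infsum_Sigma_finite_ennreal)
    also have "\<dots> \<le> infsum f (Sigma A B)"
      by (rule infsum_mono_neutral) (use F in force)+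
    finally show "(\<Sum>x\<in>F. infsum (\<lambda>y. f (x, y)) (B x)) \<le> infsum f (Sigma A B)" .
  qed
qed

lemma infsum_fibres_ennreal:
  fixes f :: "'b \<Rightarrow> ennreal"
  assumes "k ` S \<subseteq> T"
  shows "infsum f S = infsum (\<lambda>l. infsum f {s \<in> S. k s = l}) T"
proof -
  have "infsum f S = infsum (\<lambda>(l, s). f s) (Sigma T (\<lambda>l. {s \<in> S. k s = l}))"
    by (rule infsum_reindex_bij_witness[of _ snd "\<lambda>s. (k s, s)"]) (use assms in auto)
  then show ?thesis by (simp add: infsum_Sigma_ennreal)
qed

lemma infsum_mono_set_ennreal:
  fixes f :: "'b \<Rightarrow> ennreal"
  shows "A \<subseteq> B \<Longrightarrow> infsum f A \<le> infsum f B"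
  by (rule infsum_mono_neutral) auto

lemma infsum_Collect_ennreal:
  fixes f :: "'b \<Rightarrow> ennreal"
  shows "infsum f {x \<in> S. P x} = infsum (\<lambda>x. f x * of_bool (P x)) S"
  by (rule infsum_cong_neutral) auto

lemma suminf_eq_infsum_ennreal:
  fixes f :: "nat \<Rightarrow> ennreal"
  shows "suminf f = infsum f UNIV"
  by (rule sums_unique[symmetric], rule has_sum_imp_sums, rule has_sum_infsum) simp

section \<open>Walk weights\<close>

definition trans_prob :: "('a \<Rightarrow> 'a \<Rightarrow> bool) \<Rightarrow> 'a \<Rightarrow> 'a \<Rightarrow> ennreal" where
  "trans_prob E v u = (if E v u then ennreal (1 / real (card (nbrs E v))) else 0)"

fun walk_weight :: "('a \<Rightarrow> 'a \<Rightarrow> bool) \<Rightarrow> 'a list \<Rightarrow> ennreal" where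
  "walk_weight E [] = 0"
| "walk_weight E [v] = 1"
| "walk_weight E (v # u # p) = trans_prob E v u * walk_weight E (u # p)"

lemma walk_weight_glue:
  assumes "q \<noteq> []" "r \<noteq> []" "last q = hd r"
  shows "walk_weight E (q @ tl r) = walk_weight E q * walk_weight E r"
  using assms
proof (induction E q rule: walk_weight.induct)
  case (2 E v)
  then show ?case by (cases r) auto
qed (simp_all add: mult.assoc)

lemma walk_weight_snoc:
  "q \<noteq> [] \<Longrightarrow> walk_weight E (q @ [v]) = walk_weight E q * trans_prob E (last q) v"
  using walk_weight_glue[of q "[last q, v]" E] by simp

lemma walk_weight_nonzero_imp_successively:
  "walk_weight E p \<noteq> 0 \<Longrightarrow> p \<noteq> [] \<and> successively E p"
  by (induction E p rule: walk_weight.induct) (auto simp: trans_prob_def split: if_splits)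

text \<open>When the neighbourhood of v is infinite, card gives 0 and the transition
  probabilities from v all vanish, so this bound needs no local finiteness.\<close>
lemma sum_trans_prob_le_1:
  assumes "finite U"
  shows "(\<Sum>u\<in>U. trans_prob E v u) \<le> 1"
proof (cases "finite (nbrs E v)")
  case True
  have "(\<Sum>u\<in>U. trans_prob E v u) = (\<Sum>u\<in>U \<inter> nbrs E v. ennreal (1 / real (card (nbrs E v))))"
    using assms by (intro sum.mono_neutral_cong_right) (auto simp: trans_prob_def nbrs_def)
  also have "\<dots> = ennreal (real (card (U \<inter> nbrs E v)) / real (card (nbrs E v)))"
    by (simp add: ennreal_of_nat_eq_real_of_nat ennreal_mult'[symmetric] divide_inverse)
  also have "\<dots> \<le> 1"
    using card_mono[OF True, of "U \<inter> nbrs E v"]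
    by (cases "card (nbrs E v) = 0") (simp_all add: divide_le_eq_1)
  finally show ?thesis .
next
  case False
  then have "trans_prob E v u = 0" for u by (simp add: trans_prob_def)
  then show ?thesis by simp
qed

lemma sum_walk_weight_first_step:
  assumes "finite F" "\<And>p. p \<in> F \<Longrightarrow> \<exists>p'. p = x # p' \<and> p' \<noteq> []"
  shows "sum (walk_weight E) F
    = (\<Sum>u\<in>hd ` tl ` F. trans_prob E x u * sum (walk_weight E) {p. x # p \<in> F \<and> p \<noteq> [] \<and> hd p = u})"
proof -
  have "sum (walk_weight E) F = (\<Sum>u\<in>hd ` tl ` F. sum (walk_weight E) {p \<in> F. hd (tl p) = u})"
    using assms(1) by (simp add: sum.image_gen[of F _ "\<lambda>p. hd (tl p)"] image_image)
  also have "\<dots> = (\<Sum>u\<in>hd ` tl ` F.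
      trans_prob E x u * sum (walk_weight E) {p. x # p \<in> F \<and> p \<noteq> [] \<and> hd p = u})"
  proof (rule sum.cong[OF refl])
    fix u
    let ?S = "{p. x # p \<in> F \<and> p \<noteq> [] \<and> hd p = u}"
    have "{p \<in> F. hd (tl p) = u} = Cons x ` ?S"
      using assms(2) by force
    moreover have "sum (walk_weight E) (Cons x ` ?S) = (\<Sum>p\<in>?S. trans_prob E x u * walk_weight E p)"
      by (subst sum.reindex) (auto simp: neq_Nil_conv intro!: sum.cong)
    ultimately show "sum (walk_weight E) {p \<in> F. hd (tl p) = u} = trans_prob E x u * sum (walk_weight E) ?S"
      by (simp add: sum_distrib_left)
  qed
  finally show ?thesis .
qed

lemma sum_walk_weight_prefix_free_le_1:
  assumes "finite F" "\<And>p. p \<in> F \<Longrightarrow> p \<noteq> [] \<and> hd p = x"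
    and "\<And>p q. p \<in> F \<Longrightarrow> q \<in> F \<Longrightarrow> prefix p q \<Longrightarrow> p = q"
    and "\<And>p. p \<in> F \<Longrightarrow> length p \<le> n"
  shows "sum (walk_weight E) F \<le> 1"
  using assms
proof (induction n arbitrary: x F)
  case 0
  then show ?case by fastforce
next
  case (Suc n)
  have prefix_x: "prefix [x] p" if "p \<in> F" for p
    using Suc.prems(2)[OF that] by (cases p) auto
  show ?case
  proof (cases "[x] \<in> F")
    case True
    then have "F = {[x]}" using prefix_x Suc.prems(3) by blast
    then show ?thesis by simp
  next
    case False
    define F' where "F' u = {p. x # p \<in> F \<and> p \<noteq> [] \<and> hd p = u}" for u
    have "\<exists>p'. p = x # p' \<and> p' \<noteq> []" if "p \<in> F" for p
      using that False prefix_x[OF that] by (auto simp: prefix_def)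
    then have "sum (walk_weight E) F = (\<Sum>u\<in>hd ` tl ` F. trans_prob E x u * sum (walk_weight E) (F' u))"
      unfolding F'_def by (rule sum_walk_weight_first_step[OF Suc.prems(1)])
    also have "\<dots> \<le> (\<Sum>u\<in>hd ` tl ` F. trans_prob E x u)"
    proof (intro sum_mono)
      fix u
      have "sum (walk_weight E) (F' u) \<le> 1"
      proof (rule Suc.IH)
        have "F' u \<subseteq> Cons x -` F" by (auto simp: F'_def)
        moreover have "finite (Cons x -` F)"
          using Suc.prems(1) by (rule finite_vimageI) (simp add: inj_def)
        ultimately show "finite (F' u)" by (rule finite_subset)
        show "p \<noteq> [] \<and> hd p = u" "length p \<le> n" if "p \<in> F' u" for p
          using that Suc.prems(4)[of "x # p"] by (simp_all add: F'_def)
        show "p = q" if "p \<in> F' u" "q \<in> F' u" "prefix p q" for p q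
          using that Suc.prems(3)[of "x # p" "x # q"] by (simp add: F'_def)
      qed
      then show "trans_prob E x u * sum (walk_weight E) (F' u) \<le> trans_prob E x u"
        using mult_left_mono[of _ 1 "trans_prob E x u"] by simp
    qed
    also have "\<dots> \<le> 1"
      using Suc.prems(1) by (simp add: sum_trans_prob_le_1)
    finally show ?thesis .
  qed
qed

abbreviation paths_weight :: "('a \<Rightarrow> 'a \<Rightarrow> bool) \<Rightarrow> 'a list set \<Rightarrow> ennreal" where
  "paths_weight E S \<equiv> infsum (walk_weight E) S"

definition hitting_paths :: "'a set \<Rightarrow> 'a \<Rightarrow> 'a list set" where
  "hitting_paths K z = {p. first_hit K p \<and> hd p = z}"

lemma set_butlast_last: "p \<noteq> [] \<Longrightarrow> set p = insert (last p) (set (butlast p))"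
  by (metis append_butlast_last_id list.simps(15) rotate1.simps(2) set_rotate1)

lemma first_hit_iff: "first_hit K p \<longleftrightarrow> p \<noteq> [] \<and> last p \<in> K \<and> set (butlast p) \<inter> K = {}"
proof -
  have "(\<forall>i < length p - 1. p ! i \<notin> K) \<longleftrightarrow> set (butlast p) \<inter> K = {}"
    by (metis (no_types, lifting) disjoint_iff in_set_conv_nth length_butlast nth_butlast)
  then show ?thesis unfolding first_hit_def by blast
qed

lemma hitting_paths_iff:
  "p \<in> hitting_paths K z \<longleftrightarrow> p \<noteq> [] \<and> hd p = z \<and> last p \<in> K \<and> set (butlast p) \<inter> K = {}"
  unfolding hitting_paths_def first_hit_iff by blast

lemma hitting_paths_prefix_eq:
  assumes "p \<in> hitting_paths K z" "q \<in> hitting_paths K z" "prefix p q"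
  shows "p = q"
proof -
  obtain zs where q: "q = p @ zs" using assms(3) by (auto simp: prefix_def)
  have "last p \<notin> set (butlast q)" "p \<noteq> []"
    using assms(1,2) by (auto simp: hitting_paths_iff)
  then have "zs = []" unfolding q by (auto simp: butlast_append split: if_splits)
  then show ?thesis by (simp add: q)
qed

lemma paths_weight_hitting_paths_le_1: "paths_weight E (hitting_paths K z) \<le> 1"
proof (rule infsum_le_finite_sums, simp)
  fix F assume F: "finite F" "F \<subseteq> hitting_paths K z"
  show "sum (walk_weight E) F \<le> 1"
  proof (rule sum_walk_weight_prefix_free_le_1[of F z "Max (length ` F)"])
    show "p \<noteq> [] \<and> hd p = z" if "p \<in> F" for p
      using F that by (auto simp: hitting_paths_iff)
    show "p = q" if "p \<in> F" "q \<in> F" "prefix p q" for p q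
      using F(2) that hitting_paths_prefix_eq by (meson subsetD)
  qed (use F in simp_all)
qed

section \<open>Cutting paths at a vertex\<close>

lemma paths_weight_glue:
  assumes "\<And>q. q \<in> L \<Longrightarrow> q \<noteq> []"
    and "\<And>q r. q \<in> L \<Longrightarrow> r \<in> R q \<Longrightarrow> r \<noteq> [] \<and> hd r = last q"
    and "inj_on (\<lambda>(q, r). q @ tl r) (Sigma L R)"
  shows "paths_weight E ((\<lambda>(q, r). q @ tl r) ` Sigma L R)
    = infsum (\<lambda>q. walk_weight E q * paths_weight E (R q)) L"
proof -
  have "paths_weight E ((\<lambda>(q, r). q @ tl r) ` Sigma L R)
      = infsum (\<lambda>(q, r). walk_weight E q * walk_weight E r) (Sigma L R)"
    by (subst infsum_reindex[OF assms(3)]) (auto intro!: infsum_cong simp: walk_weight_glue assms(1,2))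
  then show ?thesis
    by (simp add: infsum_Sigma_ennreal infsum_cmult_right_ennreal)
qed

lemma paths_weight_image_Cons:
  assumes "\<And>r. r \<in> T \<Longrightarrow> r \<noteq> [] \<and> hd r = w"
  shows "paths_weight E (Cons z ` T) = trans_prob E z w * paths_weight E T"
proof -
  have "walk_weight E (z # r) = trans_prob E z w * walk_weight E r" if "r \<in> T" for r
    using assms[OF that] by (cases r) auto
  then have "paths_weight E (Cons z ` T) = infsum (\<lambda>r. trans_prob E z w * walk_weight E r) T"
    by (simp add: infsum_reindex o_def cong: infsum_cong)
  then show ?thesis by (simp add: infsum_cmult_right_ennreal)
qed

lemma split_first_unique:
  assumes "ys1 @ c # zs1 = ys2 @ c # zs2" "c \<notin> set ys1" "c \<notin> set ys2"
  shows "ys1 = ys2 \<and> zs1 = zs2"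
  using assms
proof (induction ys1 arbitrary: ys2)
  case Nil then show ?case by (cases ys2) auto
next
  case (Cons a ys1) then show ?case by (cases ys2) auto
qed

lemma split_last_unique:
  assumes "ys1 @ c # zs1 = ys2 @ c # zs2" "c \<notin> set zs1" "c \<notin> set zs2"
  shows "ys1 = ys2 \<and> zs1 = zs2"
  using split_first_unique[of "rev zs1" c "rev ys1" "rev zs2" "rev ys2"] assms
  by (metis rev_append rev.simps(2) append_assoc append_Cons append_Nil rev_rev_ident set_rev)

lemma paths_weight_product:
  assumes "\<And>q. q \<in> Q \<Longrightarrow> q \<noteq> [] \<and> last q = c" "\<And>r. r \<in> R \<Longrightarrow> r \<noteq> [] \<and> hd r = c"
    and "inj_on (\<lambda>(q, r). q @ tl r) (Q \<times> R)"
  shows "paths_weight E ((\<lambda>(q, r). q @ tl r) ` (Q \<times> R)) = paths_weight E Q * paths_weight E R"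
  using paths_weight_glue[of Q "\<lambda>_. R" E] assms by (simp add: infsum_cmult_left_ennreal)

text \<open>The two splitting lemmas below cut each path of P at its first (respectively last)
  visit to c; the pieces range independently over Q and R.\<close>

lemma paths_weight_split_first_visit:
  assumes Q: "\<And>q. q \<in> Q \<Longrightarrow> q \<noteq> [] \<and> last q = c \<and> c \<notin> set (butlast q)"
    and R: "\<And>r. r \<in> R \<Longrightarrow> r \<noteq> [] \<and> hd r = c"
    and QR: "\<And>ys zs. ys @ [c] \<in> Q \<Longrightarrow> c # zs \<in> R \<Longrightarrow> ys @ c # zs \<in> P"
    and P: "\<And>ys zs. ys @ c # zs \<in> P \<Longrightarrow> c \<notin> set ys \<Longrightarrow> ys @ [c] \<in> Q \<and> c # zs \<in> R"
    and Pc: "\<And>p. p \<in> P \<Longrightarrow> c \<in> set p"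
  shows "paths_weight E P = paths_weight E Q * paths_weight E R"
proof -
  have split: "\<exists>ys zs. q = ys @ [c] \<and> c \<notin> set ys \<and> r = c # zs" if "q \<in> Q" "r \<in> R" for q r
    using Q[OF that(1)] R[OF that(2)] by (cases r) (auto intro!: exI[of _ "butlast q"])
  have "P = (\<lambda>(q, r). q @ tl r) ` (Q \<times> R)"
  proof (intro equalityI subsetI)
    fix p assume "p \<in> P"
    then obtain ys zs where "p = ys @ c # zs" "c \<notin> set ys"
      using Pc split_list_first by metis
    with P[of ys zs] \<open>p \<in> P\<close> show "p \<in> (\<lambda>(q, r). q @ tl r) ` (Q \<times> R)"
      by (auto intro!: image_eqI[where x="(ys @ [c], c # zs)"])
  next
    fix p assume "p \<in> (\<lambda>(q, r). q @ tl r) ` (Q \<times> R)"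
    then obtain q r where "q \<in> Q" "r \<in> R" "p = q @ tl r" by auto
    with split[of q r] QR show "p \<in> P" by auto
  qed
  moreover have "inj_on (\<lambda>(q, r). q @ tl r) (Q \<times> R)"
  proof (rule inj_onI, clarify)
    fix q1 r1 q2 r2 assume "q1 \<in> Q" "r1 \<in> R" "q2 \<in> Q" "r2 \<in> R" and eq: "q1 @ tl r1 = q2 @ tl r2"
    then obtain ys1 zs1 ys2 zs2 where "q1 = ys1 @ [c]" "r1 = c # zs1" "q2 = ys2 @ [c]" "r2 = c # zs2"
      and "c \<notin> set ys1" "c \<notin> set ys2"
      using split by meson
    with eq show "q1 = q2 \<and> r1 = r2" using split_first_unique[of ys1 c zs1 ys2 zs2] by simp
  qed
  ultimately show ?thesis using Q R by (simp add: paths_weight_product)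
qed

lemma paths_weight_split_last_visit:
  assumes Q: "\<And>q. q \<in> Q \<Longrightarrow> q \<noteq> [] \<and> last q = c"
    and R: "\<And>r. r \<in> R \<Longrightarrow> r \<noteq> [] \<and> hd r = c \<and> c \<notin> set (tl r)"
    and QR: "\<And>ys zs. ys @ [c] \<in> Q \<Longrightarrow> c # zs \<in> R \<Longrightarrow> ys @ c # zs \<in> P"
    and P: "\<And>ys zs. ys @ c # zs \<in> P \<Longrightarrow> c \<notin> set zs \<Longrightarrow> ys @ [c] \<in> Q \<and> c # zs \<in> R"
    and Pc: "\<And>p. p \<in> P \<Longrightarrow> c \<in> set p"
  shows "paths_weight E P = paths_weight E Q * paths_weight E R"
proof -
  have split: "\<exists>ys zs. q = ys @ [c] \<and> r = c # zs \<and> c \<notin> set zs" if "q \<in> Q" "r \<in> R" for q r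
    using Q[OF that(1)] R[OF that(2)] by (cases r) (auto intro!: exI[of _ "butlast q"])
  have "P = (\<lambda>(q, r). q @ tl r) ` (Q \<times> R)"
  proof (intro equalityI subsetI)
    fix p assume "p \<in> P"
    then obtain ys zs where "p = ys @ c # zs" "c \<notin> set zs"
      using Pc split_list_last by metis
    with P[of ys zs] \<open>p \<in> P\<close> show "p \<in> (\<lambda>(q, r). q @ tl r) ` (Q \<times> R)"
      by (auto intro!: image_eqI[where x="(ys @ [c], c # zs)"])
  next
    fix p assume "p \<in> (\<lambda>(q, r). q @ tl r) ` (Q \<times> R)"
    then obtain q r where "q \<in> Q" "r \<in> R" "p = q @ tl r" by auto
    with split[of q r] QR show "p \<in> P" by auto
  qed
  moreover have "inj_on (\<lambda>(q, r). q @ tl r) (Q \<times> R)"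
  proof (rule inj_onI, clarify)
    fix q1 r1 q2 r2 assume "q1 \<in> Q" "r1 \<in> R" "q2 \<in> Q" "r2 \<in> R" and eq: "q1 @ tl r1 = q2 @ tl r2"
    then obtain ys1 zs1 ys2 zs2 where "q1 = ys1 @ [c]" "r1 = c # zs1" "q2 = ys2 @ [c]" "r2 = c # zs2"
      and "c \<notin> set zs1" "c \<notin> set zs2"
      using split by meson
    with eq show "q1 = q2 \<and> r1 = r2" using split_last_unique[of ys1 c zs1 ys2 zs2] by simp
  qed
  ultimately show ?thesis using Q R by (simp add: paths_weight_product)
qed

section \<open>Green functions\<close>

definition avoiding_paths :: "'a set \<Rightarrow> 'a \<Rightarrow> 'a \<Rightarrow> 'a list set" where
  "avoiding_paths K a b = {p. p \<noteq> [] \<and> hd p = a \<and> last p = b \<and> set p \<inter> K = {}}"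

definition green :: "('a \<Rightarrow> 'a \<Rightarrow> bool) \<Rightarrow> 'a set \<Rightarrow> 'a \<Rightarrow> ennreal" where
  "green E K z = paths_weight E (avoiding_paths K z z)"

lemma hd_append_Cons: "hd (ys @ c # zs) = (if ys = [] then c else hd ys)"
  by (cases ys) auto

lemmas path_split_simps = avoiding_paths_def hd_append_Cons butlast_append

lemma paths_weight_avoiding_paths_last_visit:
  "paths_weight E (avoiding_paths K u v)
    = green E K u * paths_weight E {r \<in> avoiding_paths K u v. u \<notin> set (tl r)}"
  unfolding green_def
  by (rule paths_weight_split_last_visit[where c=u])
     (auto simp: path_split_simps split: if_splits)

lemma paths_weight_avoiding_paths_first_visit:
  "paths_weight E (avoiding_paths K u v)
    = paths_weight E {s \<in> avoiding_paths K u v. v \<notin> set (butlast s)} * green E K v"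
  unfolding green_def
  by (rule paths_weight_split_first_visit[where c=v])
     (auto simp: path_split_simps split: if_splits)

lemma paths_weight_no_return_first_visit:
  assumes "u \<noteq> v"
  shows "paths_weight E {r \<in> avoiding_paths K u v. u \<notin> set (tl r)}
    = paths_weight E {s \<in> avoiding_paths K u v. u \<notin> set (tl s) \<and> v \<notin> set (butlast s)}
      * green E (insert u K) v"
  unfolding green_def
  by (rule paths_weight_split_first_visit[where c=v])
     (use assms in \<open>auto simp: path_split_simps split: if_splits\<close>)

lemma paths_weight_first_visit_last_visit:
  assumes "u \<noteq> v"
  shows "paths_weight E {s \<in> avoiding_paths K u v. v \<notin> set (butlast s)}
    = green E (insert v K) u
      * paths_weight E {s \<in> avoiding_paths K u v. u \<notin> set (tl s) \<and> v \<notin> set (butlast s)}"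
  unfolding green_def
  by (rule paths_weight_split_last_visit[where c=u])
     (use assms in \<open>auto simp: path_split_simps split: if_splits\<close>)

lemma green_insert:
  "green E K v = green E (insert u K) v
    + paths_weight E {s \<in> avoiding_paths K v u. u \<notin> set (butlast s)} * paths_weight E (avoiding_paths K u v)"
proof -
  have "avoiding_paths K v v = avoiding_paths (insert u K) v v \<union> {q \<in> avoiding_paths K v v. u \<in> set q}"
    and "avoiding_paths (insert u K) v v \<inter> {q \<in> avoiding_paths K v v. u \<in> set q} = {}"
    by (auto simp: avoiding_paths_def)
  then have "green E K v = green E (insert u K) v + paths_weight E {q \<in> avoiding_paths K v v. u \<in> set q}"
    unfolding green_def by (metis infsum_Un_disjoint summable_on_ennreal_complete)
  also have "paths_weight E {q \<in> avoiding_paths K v v. u \<in> set q}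
    = paths_weight E {s \<in> avoiding_paths K v u. u \<notin> set (butlast s)} * paths_weight E (avoiding_paths K u v)"
    by (rule paths_weight_split_first_visit[where c=u])
       (auto simp: path_split_simps split: if_splits)
  finally show ?thesis .
qed

lemma paths_weight_excursions_le_1:
  "paths_weight E {s \<in> avoiding_paths K u v. u \<notin> set (tl s) \<and> v \<notin> set (butlast s)} \<le> 1"
proof -
  have "{s \<in> avoiding_paths K u v. u \<notin> set (tl s) \<and> v \<notin> set (butlast s)} \<subseteq> hitting_paths (insert v K) u"
    by (auto simp: avoiding_paths_def hitting_paths_iff) (blast dest: in_set_butlastD)
  then have "paths_weight E {s \<in> avoiding_paths K u v. u \<notin> set (tl s) \<and> v \<notin> set (butlast s)}
      \<le> paths_weight E (hitting_paths (insert v K) u)"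
    by (rule infsum_mono_set_ennreal)
  also have "\<dots> \<le> 1" by (rule paths_weight_hitting_paths_le_1)
  finally show ?thesis .
qed

text \<open>Multiplied by the excursion weight N, both sides give the weight of the paths from u to v
  avoiding K, cut at the last visit to u or at the first visit to v. As N \<le> 1 it cancels,
  unless N = 0, in which case both sides are unchanged by removing the other vertex from
  the paths.\<close>
lemma green_swap:
  assumes "u \<noteq> v"
  shows "green E K u * green E (insert u K) v = green E K v * green E (insert v K) u"
proof -
  let ?N = "paths_weight E {s \<in> avoiding_paths K u v. u \<notin> set (tl s) \<and> v \<notin> set (butlast s)}"
  have via_u: "paths_weight E (avoiding_paths K u v) = (green E K u * green E (insert u K) v) * ?N"
    using paths_weight_avoiding_paths_last_visit[of E K u v]
      paths_weight_no_return_first_visit[OF assms, of E K] by (simp add: ac_simps)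
  have via_v: "paths_weight E (avoiding_paths K u v) = (green E K v * green E (insert v K) u) * ?N"
    using paths_weight_avoiding_paths_first_visit[of E K u v]
      paths_weight_first_visit_last_visit[OF assms, of E K] by (simp add: ac_simps)
  show ?thesis
  proof (cases "?N = 0")
    case False
    moreover have "?N \<noteq> top"
      using paths_weight_excursions_le_1[of E K u v] by (auto simp: top_unique)
    moreover have "?N * (green E K u * green E (insert u K) v) = ?N * (green E K v * green E (insert v K) u)"
      using via_u via_v by (simp add: mult.commute)
    ultimately show ?thesis by (simp add: ennreal_mult_cancel_left)
  next
    case True
    then have "paths_weight E (avoiding_paths K u v) = 0"
      and "paths_weight E {s \<in> avoiding_paths K u v. v \<notin> set (butlast s)} = 0"
      using via_u paths_weight_first_visit_last_visit[OF assms, of E K] by simp_all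
    then show ?thesis
      using green_insert[of E K v u] green_insert[of E K u v] by (simp add: mult.commute)
  qed
qed

section \<open>Loop erasure and Lawler's formula\<close>

definition after_last :: "'a \<Rightarrow> 'a list \<Rightarrow> 'a list" where
  "after_last z p = rev (takeWhile (\<lambda>v. v \<noteq> z) (rev p))"

lemma after_last_Nil [simp]: "after_last z [] = []"
  by (simp add: after_last_def)

lemma suffix_after_last: "suffix (after_last z p) p"
  unfolding after_last_def suffix_def by (metis rev_append rev_rev_ident takeWhile_dropWhile_id)

lemma notin_after_last: "z \<notin> set (after_last z p)"
  unfolding after_last_def by (metis (mono_tags, lifting) set_rev set_takeWhileD)

lemma after_last_append_Cons: "z \<notin> set zs \<Longrightarrow> after_last z (ys @ z # zs) = zs"
proof -
  assume "z \<notin> set zs"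
  then have "takeWhile (\<lambda>v. v \<noteq> z) (rev zs @ z # rev ys) = rev zs"
    by (subst takeWhile_append2) auto
  then show ?thesis unfolding after_last_def by simp
qed

lemma after_last_notin: "z \<notin> set p \<Longrightarrow> after_last z p = p"
  unfolding after_last_def by (induction p rule: rev_induct) auto

lemma after_last_Nil_imp:
  assumes "after_last z p = []"
  shows "p = [] \<or> last p = z"
proof (cases "z \<in> set p")
  case True
  then obtain ys zs where "p = ys @ z # zs" "z \<notin> set zs" by (metis split_list_last)
  then show ?thesis using assms by (simp add: after_last_append_Cons)
next
  case False
  then show ?thesis using assms after_last_notin[of z p] by simp
qed

function loop_erase :: "'a list \<Rightarrow> 'a list" where
  "loop_erase [] = []"
| "loop_erase (z # p) = z # loop_erase (after_last z p)"
  by pat_completeness auto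
termination
  by (relation "Wellfounded.measure length") (simp_all add: less_Suc_eq_le suffix_length_le[OF suffix_after_last])

lemma loop_erase_eq_Nil_iff [simp]: "loop_erase p = [] \<longleftrightarrow> p = []"
  by (cases p) auto

lemma hd_loop_erase: "p \<noteq> [] \<Longrightarrow> hd (loop_erase p) = hd p"
  by (cases p) auto

lemma set_loop_erase: "set (loop_erase p) \<subseteq> set p"
proof (induction p rule: loop_erase.induct)
  case (2 z p)
  then show ?case using set_mono_suffix[OF suffix_after_last, of z p] by auto
qed simp

lemma distinct_loop_erase: "distinct (loop_erase p)"
proof (induction p rule: loop_erase.induct)
  case (2 z p)
  then show ?case using notin_after_last[of z p] set_loop_erase[of "after_last z p"] by auto
qed simp

lemma last_loop_erase: "p \<noteq> [] \<Longrightarrow> last (loop_erase p) = last p"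
proof (induction p rule: loop_erase.induct)
  case (2 z p)
  show ?case
  proof (cases "after_last z p = []")
    case True
    then show ?thesis using after_last_Nil_imp[of z p] by auto
  next
    case False
    obtain ys where "p = ys @ after_last z p"
      using suffix_after_last[of z p] by (auto simp: suffix_def)
    then have "last (after_last z p) = last p" "p \<noteq> []"
      using False by (metis last_appendR) (use False in auto)
    then show ?thesis using 2 False by simp
  qed
qed simp

lemma loop_erase_append_Cons:
  assumes "z \<notin> set zs" "ys = [] \<or> hd ys = z"
  shows "loop_erase (ys @ z # zs) = z # loop_erase zs"
  using assms by (cases ys) (auto simp: after_last_notin after_last_append_Cons)

lemma successively_loop_erase: "successively R p \<Longrightarrow> successively R (loop_erase p)"
proof (induction p rule: loop_erase.induct)
  case (2 z p)
  have "successively R (z # after_last z p)"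
  proof (cases "z \<in> set p")
    case True
    then obtain ys zs where "p = ys @ z # zs" "z \<notin> set zs" by (metis split_list_last)
    then show ?thesis
      using "2.prems" successively_append_iff[of R "z # ys" "z # zs"] by (simp add: after_last_append_Cons)
  next
    case False
    then show ?thesis using "2.prems" by (simp add: after_last_notin)
  qed
  then have "successively R (loop_erase (after_last z p))"
    using 2 by (cases "after_last z p") auto
  with \<open>successively R (z # after_last z p)\<close> show ?case
    by (cases "after_last z p") (auto simp: successively_Cons hd_loop_erase)
qed simp

lemma loop_erase_hitting_paths:
  assumes "p \<in> hitting_paths K z"
  shows "loop_erase p \<in> hitting_paths K z"
proof -
  have ne: "p \<noteq> []" using assms by (simp add: hitting_paths_iff)
  have "x \<notin> K" if x: "x \<in> set (butlast (loop_erase p))" for x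
  proof -
    have "x \<noteq> last (loop_erase p)"
      using x distinct_loop_erase[of p] ne
      by (metis append_butlast_last_id distinct_append disjoint_iff loop_erase_eq_Nil_iff list.set_intros(1))
    moreover have "x \<in> set p" using x set_loop_erase[of p] by (meson in_set_butlastD subsetD)
    ultimately have "x \<in> set (butlast p)"
      using ne last_loop_erase[OF ne] by (metis append_butlast_last_id rotate1.simps(2) set_ConsD set_rotate1)
    then show ?thesis using assms by (auto simp: hitting_paths_iff)
  qed
  then show ?thesis
    using assms ne last_loop_erase[OF ne] hd_loop_erase[OF ne] by (auto simp: hitting_paths_iff)
qed

text \<open>green_prod E K [v1, ..., vn] is the product of the Green functions at vi of the
  walk killed on K \<union> {v1, ..., v(i-1)}: the loop weight in Lawler's formula. By green_swap
  it does not depend on the order of the vi.\<close>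
fun green_prod :: "('a \<Rightarrow> 'a \<Rightarrow> bool) \<Rightarrow> 'a set \<Rightarrow> 'a list \<Rightarrow> ennreal" where
  "green_prod E K [] = 1"
| "green_prod E K (v # vs) = green E K v * green_prod E (insert v K) vs"

lemma green_prod_append: "green_prod E K (xs @ ys) = green_prod E K xs * green_prod E (K \<union> set xs) ys"
  by (induction xs arbitrary: K) (simp_all add: mult.assoc)

lemma green_prod_move_to_front:
  assumes "v \<notin> set ys1"
  shows "green_prod E K (ys1 @ v # ys2) = green_prod E K (v # ys1 @ ys2)"
  using assms
proof (induction ys1 arbitrary: K)
  case (Cons w ys1)
  have "green_prod E K ((w # ys1) @ v # ys2)
      = (green E K w * green E (insert w K) v) * green_prod E (insert v (insert w K)) (ys1 @ ys2)"
    using Cons by (simp add: mult.assoc)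
  also have "\<dots> = (green E K v * green E (insert v K) w) * green_prod E (insert w (insert v K)) (ys1 @ ys2)"
    using Cons.prems green_swap[of w v E K] by (auto simp: insert_commute)
  finally show ?case by (simp add: mult.assoc)
qed simp

lemma green_prod_perm:
  assumes "distinct xs" "distinct ys" "set xs = set ys"
  shows "green_prod E K xs = green_prod E K ys"
  using assms
proof (induction xs arbitrary: K ys)
  case (Cons v xs)
  then obtain ys1 ys2 where ys: "ys = ys1 @ v # ys2" by (metis list.set_intros(1) split_list)
  have "green_prod E K ys = green E K v * green_prod E (insert v K) (ys1 @ ys2)"
    using Cons.prems by (simp add: ys green_prod_move_to_front)
  also have "green_prod E (insert v K) (ys1 @ ys2) = green_prod E (insert v K) xs"
    by (rule Cons.IH[symmetric]) (use Cons.prems ys in auto)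
  finally show ?case by simp
qed simp

lemma hitting_paths_of_mem:
  assumes "z \<in> K"
  shows "hitting_paths K z = {[z]}"
proof (intro equalityI subsetI)
  fix p assume "p \<in> hitting_paths K z"
  then show "p \<in> {[z]}" using assms by (cases p) (auto simp: hitting_paths_iff split: if_splits)
qed (use assms in \<open>simp add: hitting_paths_iff\<close>)

lemma hitting_paths_split_last_visit:
  assumes "z \<notin> K" "z \<notin> set zs"
  shows "ys @ z # zs \<in> hitting_paths K z
    \<longleftrightarrow> ys @ [z] \<in> avoiding_paths K z z \<and> zs \<in> hitting_paths (insert z K) (hd zs)"
proof
  assume "ys @ z # zs \<in> hitting_paths K z"
  moreover from this have "zs \<noteq> []" using assms(1) by (auto simp: hitting_paths_iff)
  ultimately show "ys @ [z] \<in> avoiding_paths K z z \<and> zs \<in> hitting_paths (insert z K) (hd zs)"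
    using assms by (auto simp: hitting_paths_iff avoiding_paths_def hd_append_Cons butlast_append
        split: if_splits dest: in_set_butlastD)
next
  assume *: "ys @ [z] \<in> avoiding_paths K z z \<and> zs \<in> hitting_paths (insert z K) (hd zs)"
  then have "last zs \<noteq> z" using assms(2) last_in_set by (auto simp: hitting_paths_iff)
  with * show "ys @ z # zs \<in> hitting_paths K z"
    using assms by (auto simp: hitting_paths_iff avoiding_paths_def hd_append_Cons butlast_append
        split: if_splits dest: in_set_butlastD)
qed

text \<open>Cut p at its last visit to z: the part before is a loop at z avoiding K, the part after
  leaves z for good, and its loop erasure is that of p with z removed.\<close>
lemma paths_weight_loop_erase_Cons:
  assumes "z \<notin> K" "last (w # l) \<in> K"
  shows "paths_weight E {p \<in> hitting_paths K z. loop_erase p = z # w # l}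
    = green E K z * (trans_prob E z w
        * paths_weight E {r \<in> hitting_paths (insert z K) w. loop_erase r = w # l})"
proof -
  define T where "T = {r \<in> hitting_paths (insert z K) w. loop_erase r = w # l}"
  have T: "r \<noteq> [] \<and> hd r = w \<and> z \<notin> set r" if "r \<in> T" for r
  proof -
    have r: "r \<in> hitting_paths (insert z K) w" "loop_erase r = w # l" using that by (auto simp: T_def)
    then have "r \<noteq> []" by (auto simp: hitting_paths_iff)
    then have "last r = last (w # l)" using r last_loop_erase[of r] by simp
    then show ?thesis using r assms set_butlast_last[of r] by (auto simp: hitting_paths_iff)
  qed
  have "paths_weight E {p \<in> hitting_paths K z. loop_erase p = z # w # l}
      = green E K z * paths_weight E (Cons z ` T)"
    unfolding green_def
  proof (rule paths_weight_split_last_visit[where c=z])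
    fix ys zs
    assume "ys @ [z] \<in> avoiding_paths K z z" "z # zs \<in> Cons z ` T"
    moreover from this have "ys = [] \<or> hd ys = z" by (cases ys) (auto simp: avoiding_paths_def)
    ultimately show "ys @ z # zs \<in> {p \<in> hitting_paths K z. loop_erase p = z # w # l}"
      using T[of zs] assms(1) hitting_paths_split_last_visit[of z K zs ys]
        loop_erase_append_Cons[of z zs ys] by (auto simp: T_def)
  next
    fix ys zs
    assume p: "ys @ z # zs \<in> {p \<in> hitting_paths K z. loop_erase p = z # w # l}" and "z \<notin> set zs"
    then have "ys @ [z] \<in> avoiding_paths K z z" "zs \<in> hitting_paths (insert z K) (hd zs)"
      using p hitting_paths_split_last_visit[OF assms(1) \<open>z \<notin> set zs\<close>, of ys] by auto
    moreover from this have "loop_erase zs = w # l"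
      using p \<open>z \<notin> set zs\<close> loop_erase_append_Cons[of z zs ys]
      by (cases ys) (auto simp: avoiding_paths_def)
    moreover from this have "zs \<noteq> []" "hd zs = w"
      using hd_loop_erase[of zs] by (cases zs, simp_all)+
    ultimately show "ys @ [z] \<in> avoiding_paths K z z \<and> z # zs \<in> Cons z ` T"
      by (auto simp: T_def)
  next
    show "q \<noteq> [] \<and> last q = z" if "q \<in> avoiding_paths K z z" for q
      using that by (simp add: avoiding_paths_def)
    show "r \<noteq> [] \<and> hd r = z \<and> z \<notin> set (tl r)" if "r \<in> Cons z ` T" for r
      using that by (auto dest: T)
    show "z \<in> set p" if "p \<in> {p \<in> hitting_paths K z. loop_erase p = z # w # l}" for p
      using that hd_in_set[of p] by (auto simp: hitting_paths_iff)
  qed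
  also have "paths_weight E (Cons z ` T) = trans_prob E z w * paths_weight E T"
    using T by (intro paths_weight_image_Cons) simp
  finally show ?thesis by (simp add: T_def)
qed

theorem paths_weight_loop_erase_eq:
  assumes "l \<in> hitting_paths K z" "distinct l"
  shows "paths_weight E {p \<in> hitting_paths K z. loop_erase p = l} = walk_weight E l * green_prod E K (butlast l)"
  using assms
proof (induction l arbitrary: z K)
  case Nil
  then show ?case by (simp add: hitting_paths_iff)
next
  case (Cons z' l)
  then have z: "z' = z" by (simp add: hitting_paths_iff)
  show ?case
  proof (cases l)
    case Nil
    then have "z \<in> K" using Cons.prems z by (simp add: hitting_paths_iff)
    then have "{p \<in> hitting_paths K z. loop_erase p = [z]} = {[z]}" by (auto simp: hitting_paths_of_mem)
    then show ?thesis using Nil z by simp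
  next
    case (Cons w l')
    have zK: "z \<notin> K" and last: "last (w # l') \<in> K"
      using Cons.prems z Cons by (auto simp: hitting_paths_iff)
    have "w # l' \<in> hitting_paths (insert z K) w" "distinct (w # l')"
      using Cons.prems z Cons by (auto simp: hitting_paths_iff dest: in_set_butlastD)
    then have "paths_weight E {r \<in> hitting_paths (insert z K) w. loop_erase r = w # l'}
        = walk_weight E (w # l') * green_prod E (insert z K) (butlast (w # l'))"
      using Cons.IH Cons by simp
    then show ?thesis
      using paths_weight_loop_erase_Cons[OF zK last, of E] z Cons by (simp add: ac_simps)
  qed
qed

definition simple_hitting_paths :: "'a set \<Rightarrow> 'a \<Rightarrow> 'a list set" where
  "simple_hitting_paths K z = {l \<in> hitting_paths K z. distinct l}"

lemma infsum_loop_erase: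
  "infsum (\<lambda>p. walk_weight E p * f (loop_erase p)) (hitting_paths K z)
    = infsum (\<lambda>l. walk_weight E l * green_prod E K (butlast l) * f l) (simple_hitting_paths K z)"
proof -
  have "infsum (\<lambda>p. walk_weight E p * f (loop_erase p)) (hitting_paths K z)
      = infsum (\<lambda>l. infsum (\<lambda>p. walk_weight E p * f (loop_erase p)) {p \<in> hitting_paths K z. loop_erase p = l})
          (simple_hitting_paths K z)"
    by (rule infsum_fibres_ennreal)
       (auto simp: simple_hitting_paths_def loop_erase_hitting_paths distinct_loop_erase)
  also have "\<dots> = infsum (\<lambda>l. infsum (\<lambda>p. walk_weight E p * f l) {p \<in> hitting_paths K z. loop_erase p = l})
          (simple_hitting_paths K z)"
    by (intro infsum_cong) simp
  also have "\<dots> = infsum (\<lambda>l. walk_weight E l * green_prod E K (butlast l) * f l) (simple_hitting_paths K z)"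
    by (intro infsum_cong)
       (simp add: infsum_cmult_left_ennreal simple_hitting_paths_def paths_weight_loop_erase_eq)
  finally show ?thesis .
qed

section \<open>Hitting a smaller set first\<close>

lemma hitting_paths_split:
  assumes "A \<subseteq> K" "p \<in> hitting_paths A z"
  obtains q r where "p = q @ tl r" "q \<in> hitting_paths K z" "r \<in> hitting_paths A (last q)"
proof -
  have p: "p \<noteq> []" "hd p = z" "last p \<in> A" "set (butlast p) \<inter> A = {}"
    using assms(2) by (auto simp: hitting_paths_iff)
  then obtain ys c zs where s: "p = ys @ c # zs" "c \<in> K" "\<forall>y\<in>set ys. y \<notin> K"
    using split_list_first_prop[of p "\<lambda>c. c \<in> K"] assms(1) last_in_set by blast
  have "ys @ [c] \<in> hitting_paths K z"
    using s p by (cases ys) (auto simp: hitting_paths_iff)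
  moreover have "c # zs \<in> hitting_paths A c"
    using s p by (auto simp: hitting_paths_iff butlast_append)
  ultimately show ?thesis using s(1) by (intro that[of "ys @ [c]" "c # zs"]) simp_all
qed

lemma glue_hitting_paths:
  assumes "A \<subseteq> K" "q \<in> hitting_paths K z" "r \<in> hitting_paths A (last q)"
  shows "q @ tl r \<in> hitting_paths A z"
proof -
  have q: "q \<noteq> []" "hd q = z" "last q \<in> K" "set (butlast q) \<inter> K = {}"
    and r: "r \<noteq> []" "hd r = last q" "last r \<in> A" "set (butlast r) \<inter> A = {}"
    using assms(2,3) by (auto simp: hitting_paths_iff)
  obtain zs where r_eq: "r = last q # zs" using r by (cases r) auto
  have "q @ zs = butlast q @ r" using q r_eq by simp
  then show ?thesis
    using q r r_eq assms(1) set_butlast_last[of q]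
    by (auto simp: hitting_paths_iff butlast_append split: if_splits)
qed

lemma inj_on_glue_hitting_paths:
  "inj_on (\<lambda>(q, r). q @ tl r) (Sigma (hitting_paths K z) (\<lambda>q. hitting_paths A (last q)))"
proof (rule inj_onI, clarify)
  fix q1 r1 q2 r2
  assume a: "q1 \<in> hitting_paths K z" "r1 \<in> hitting_paths A (last q1)"
    "q2 \<in> hitting_paths K z" "r2 \<in> hitting_paths A (last q2)" "q1 @ tl r1 = q2 @ tl r2"
  have "prefix q1 (q1 @ tl r1)" by simp
  moreover have "prefix q2 (q1 @ tl r1)" unfolding a(5) by simp
  ultimately have "prefix q1 q2 \<or> prefix q2 q1" by (rule prefix_same_cases)
  then have "q1 = q2"
    using hitting_paths_prefix_eq[OF a(1,3)] hitting_paths_prefix_eq[OF a(3,1)] by auto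
  moreover from this have "r1 = r2"
    using a by (cases r1; cases r2) (auto simp: hitting_paths_iff)
  ultimately show "q1 = q2 \<and> r1 = r2" by simp
qed

lemma hitting_paths_eq_glue:
  assumes "A \<subseteq> K"
  shows "hitting_paths A z = (\<lambda>(q, r). q @ tl r) ` Sigma (hitting_paths K z) (\<lambda>q. hitting_paths A (last q))"
proof (intro equalityI subsetI)
  fix p assume "p \<in> hitting_paths A z"
  then obtain q r where "p = q @ tl r" "q \<in> hitting_paths K z" "r \<in> hitting_paths A (last q)"
    by (rule hitting_paths_split[OF assms])
  then show "p \<in> (\<lambda>(q, r). q @ tl r) ` Sigma (hitting_paths K z) (\<lambda>q. hitting_paths A (last q))"
    by (auto intro!: image_eqI[where x="(q, r)"])
qed (auto intro: glue_hitting_paths[OF assms])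

text \<open>A walk from x meeting M before A first hits A \<union> M inside M.\<close>
lemma paths_weight_meets_le:
  "paths_weight E {g \<in> hitting_paths A x. set g \<inter> M \<noteq> {}}
    \<le> paths_weight E {q \<in> hitting_paths (A \<union> M) x. last q \<in> M}"
proof -
  let ?L = "{q \<in> hitting_paths (A \<union> M) x. last q \<in> M}"
  have "{g \<in> hitting_paths A x. set g \<inter> M \<noteq> {}}
      \<subseteq> (\<lambda>(q, r). q @ tl r) ` Sigma ?L (\<lambda>q. hitting_paths A (last q))"
  proof
    fix g assume g: "g \<in> {g \<in> hitting_paths A x. set g \<inter> M \<noteq> {}}"
    then obtain q r where qr: "g = q @ tl r" "q \<in> hitting_paths (A \<union> M) x" "r \<in> hitting_paths A (last q)"
      using hitting_paths_split[of A "A \<union> M" g x] by auto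
    have "last q \<in> M"
    proof (rule ccontr)
      assume "last q \<notin> M"
      then have "last q \<in> A" "last q \<notin> set (butlast g)"
        using g qr(2) by (auto simp: hitting_paths_iff)
      then have "g = q"
        using qr by (auto simp: hitting_paths_iff butlast_append split: if_splits)
      then show False using g qr(2) \<open>last q \<notin> M\<close> set_butlast_last[of q] by (auto simp: hitting_paths_iff)
    qed
    then show "g \<in> (\<lambda>(q, r). q @ tl r) ` Sigma ?L (\<lambda>q. hitting_paths A (last q))"
      using qr by (auto intro!: image_eqI[where x="(q, r)"])
  qed
  then have "paths_weight E {g \<in> hitting_paths A x. set g \<inter> M \<noteq> {}}
      \<le> paths_weight E ((\<lambda>(q, r). q @ tl r) ` Sigma ?L (\<lambda>q. hitting_paths A (last q)))"
    by (rule infsum_mono_set_ennreal)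
  also have "\<dots> = infsum (\<lambda>q. walk_weight E q * paths_weight E (hitting_paths A (last q))) ?L"
  proof (rule paths_weight_glue)
    show "inj_on (\<lambda>(q, r). q @ tl r) (Sigma ?L (\<lambda>q. hitting_paths A (last q)))"
      by (rule inj_on_subset[OF inj_on_glue_hitting_paths]) auto
  qed (auto simp: hitting_paths_iff)
  also have "\<dots> \<le> infsum (walk_weight E) ?L"
    using mult_left_mono[OF paths_weight_hitting_paths_le_1, of _ E A] by (intro infsum_mono) auto
  finally show ?thesis .
qed

lemma gpath_iff: "gpath E q \<longleftrightarrow> q \<noteq> [] \<and> successively E q"
  unfolding gpath_def successively_conv_nth by auto

text \<open>If g disconnects y from A it meets the path m, so the walk from x first hits A \<union> set m
  inside set m; Lawler's formula then accounts for its loop erasure.\<close>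
lemma paths_weight_disconnecting_le:
  assumes "gpath E m" "hd m = y" "last m \<in> A"
  shows "paths_weight E {g \<in> hitting_paths A x. disconnects E (set g) y A}
    \<le> infsum (\<lambda>l. walk_weight E l * green_prod E (A \<union> set m) (butlast l) * of_bool (last l \<in> set m))
        (simple_hitting_paths (A \<union> set m) x)"
proof -
  have "paths_weight E {g \<in> hitting_paths A x. disconnects E (set g) y A}
      \<le> paths_weight E {g \<in> hitting_paths A x. set g \<inter> set m \<noteq> {}}"
    using assms by (intro infsum_mono_set_ennreal) (auto simp: disconnects_def)
  also have "\<dots> \<le> paths_weight E {q \<in> hitting_paths (A \<union> set m) x. last q \<in> set m}"
    by (rule paths_weight_meets_le)
  also have "\<dots> = infsum (\<lambda>q. walk_weight E q * of_bool (last (loop_erase q) \<in> set m))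
      (hitting_paths (A \<union> set m) x)"
    unfolding infsum_Collect_ennreal
    by (intro infsum_cong) (simp add: hitting_paths_iff last_loop_erase)
  also have "\<dots> = infsum (\<lambda>l. walk_weight E l * green_prod E (A \<union> set m) (butlast l) * of_bool (last l \<in> set m))
        (simple_hitting_paths (A \<union> set m) x)"
    by (rule infsum_loop_erase)
  finally show ?thesis .
qed

section \<open>The simple random walk\<close>

lemma pmf_map_snoc:
  "pmf (map_pmf (\<lambda>v. q @ [v]) M) p = (if p \<noteq> [] \<and> butlast p = q then pmf M (last p) else 0)"
proof (cases "p \<noteq> [] \<and> butlast p = q")
  case True
  then have "p = q @ [last p]" by (metis append_butlast_last_id)
  then show ?thesis
    using True by (metis (no_types, lifting) inj_def pmf_map_inj' same_append_eq list.inject)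
next
  case False
  then have "p \<notin> (\<lambda>v. q @ [v]) ` set_pmf M" by auto
  then show ?thesis using False by (subst pmf_map_outside) auto
qed

lemma ennreal_pmf_srw_Suc:
  "ennreal (pmf (srw E x (Suc n)) p) = (if p = [] then 0 else
     ennreal (pmf (srw E x n) (butlast p)) * ennreal (pmf (pmf_of_set (nbrs E (last (butlast p)))) (last p)))"
proof -
  define c where "c = (if p = [] then 0 else pmf (pmf_of_set (nbrs E (last (butlast p)))) (last p))"
  have "ennreal (pmf (srw E x (Suc n)) p)
      = (\<integral>\<^sup>+q. ennreal (pmf (map_pmf (\<lambda>v. q @ [v]) (pmf_of_set (nbrs E (last q)))) p) \<partial>srw E x n)"
    by (simp add: ennreal_pmf_bind)
  also have "\<dots> = (\<integral>\<^sup>+q. ennreal c * indicator {butlast p} q \<partial>srw E x n)"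
    by (rule nn_integral_cong) (auto simp: pmf_map_snoc c_def indicator_def)
  also have "\<dots> = ennreal c * ennreal (pmf (srw E x n) (butlast p))"
    by (simp add: nn_integral_cmult_indicator emeasure_pmf_single)
  finally show ?thesis by (simp add: c_def mult.commute)
qed

locale walk_graph =
  fixes V :: "'a set" and E :: "'a \<Rightarrow> 'a \<Rightarrow> bool"
  assumes edges: "\<And>u v. E u v \<Longrightarrow> u \<in> V \<and> v \<in> V"
    and locfin: "\<And>v. v \<in> V \<Longrightarrow> finite (nbrs E v)"
    and nonisolated: "\<And>v. v \<in> V \<Longrightarrow> nbrs E v \<noteq> {}"
begin

lemma last_in_V:
  assumes "p \<noteq> []" "hd p \<in> V" "successively E p"
  shows "last p \<in> V"
proof (cases "butlast p = []")
  case True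
  with assms(1,2) show ?thesis by (metis append_butlast_last_id append_Nil last_ConsL list.sel(1))
next
  case False
  have "successively E (butlast p @ [last p])" using assms(1,3) by simp
  then have "E (last (butlast p)) (last p)" using False unfolding successively_append_iff by simp
  then show ?thesis using edges by blast
qed

lemma ennreal_pmf_of_set_nbrs:
  "v \<in> V \<Longrightarrow> ennreal (pmf (pmf_of_set (nbrs E v)) u) = trans_prob E v u"
  using locfin nonisolated by (auto simp: trans_prob_def nbrs_def indicator_def)

lemma set_pmf_srw:
  assumes "x \<in> V"
  shows "set_pmf (srw E x n) \<subseteq> {p. length p = Suc n \<and> hd p = x \<and> successively E p}"
    and "finite (set_pmf (srw E x n))"
proof (induction n)
  case (Suc n)
  have nbrs_last: "finite (nbrs E (last q)) \<and> nbrs E (last q) \<noteq> {}" if "q \<in> set_pmf (srw E x n)" for q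
    using Suc(1) that assms last_in_V[of q] locfin nonisolated by force
  then have srw_Suc: "set_pmf (srw E x (Suc n)) = (\<Union>q\<in>set_pmf (srw E x n). (\<lambda>v. q @ [v]) ` nbrs E (last q))"
    by simp
  show "set_pmf (srw E x (Suc n)) \<subseteq> {p. length p = Suc (Suc n) \<and> hd p = x \<and> successively E p}"
  proof (unfold srw_Suc, clarify)
    fix q v assume q: "q \<in> set_pmf (srw E x n)" and "v \<in> nbrs E (last q)"
    moreover have "length q = Suc n" "hd q = x" "successively E q" "q \<noteq> []" using Suc(1) q by auto
    ultimately show "length (q @ [v]) = Suc (Suc n) \<and> hd (q @ [v]) = x \<and> successively E (q @ [v])"
      by (auto simp: successively_append_iff nbrs_def)
  qed
  show "finite (set_pmf (srw E x (Suc n)))"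
    unfolding srw_Suc using Suc(2) nbrs_last by auto
qed simp_all

lemma ennreal_pmf_srw:
  assumes "x \<in> V"
  shows "ennreal (pmf (srw E x n) p) = (if length p = Suc n \<and> hd p = x then walk_weight E p else 0)"
proof (induction n arbitrary: p)
  case 0
  then show ?case by (cases p) (auto simp: indicator_def)
next
  case (Suc n)
  show ?case
  proof (cases "length p = Suc (Suc n) \<and> hd p = x")
    case False
    then have "p = [] \<or> \<not> (length (butlast p) = Suc n \<and> hd (butlast p) = x)"
      by (cases p) auto
    then show ?thesis unfolding ennreal_pmf_srw_Suc using False Suc[of "butlast p"] by auto
  next
    case True
    then have bl: "butlast p \<noteq> []" "length (butlast p) = Suc n" "hd (butlast p) = x"
      by (cases p; auto)+
    have weight: "walk_weight E p = walk_weight E (butlast p) * trans_prob E (last (butlast p)) (last p)"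
      using walk_weight_snoc[OF bl(1), of E "last p"] True by (metis append_butlast_last_id list.size(3) nat.distinct(1))
    show ?thesis
    proof (cases "walk_weight E (butlast p) = 0")
      case False
      then have "last (butlast p) \<in> V"
        using walk_weight_nonzero_imp_successively last_in_V bl assms by metis
      then show ?thesis
        unfolding ennreal_pmf_srw_Suc using True bl Suc[of "butlast p"] weight
        by (simp add: ennreal_pmf_of_set_nbrs)
    qed (unfold ennreal_pmf_srw_Suc, use True bl Suc[of "butlast p"] weight in simp)
  qed
qed

lemma ennreal_prob_srw:
  assumes "x \<in> V"
  shows "ennreal (measure_pmf.prob (srw E x n) S) = paths_weight E {p \<in> S. length p = Suc n \<and> hd p = x}"
proof -
  let ?M = "srw E x n"
  have "ennreal (measure_pmf.prob ?M S) = emeasure (measure_pmf ?M) (S \<inter> set_pmf ?M)"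
    by (simp add: measure_pmf.emeasure_eq_measure[symmetric] emeasure_Int_set_pmf)
  also have "\<dots> = infsum (\<lambda>p. ennreal (pmf ?M p)) (S \<inter> set_pmf ?M)"
    using set_pmf_srw(2)[OF assms] by (simp add: emeasure_measure_pmf_finite)
  also have "\<dots> = paths_weight E {p \<in> S. length p = Suc n \<and> hd p = x}"
  proof (rule infsum_cong_neutral)
    fix p assume "p \<in> {p \<in> S. length p = Suc n \<and> hd p = x} - S \<inter> set_pmf ?M"
    then show "walk_weight E p = 0" using ennreal_pmf_srw[OF assms, of n p] by (simp add: set_pmf_eq)
  qed (use set_pmf_srw(1)[OF assms] ennreal_pmf_srw[OF assms] in auto)
  finally show ?thesis .
qed

lemma stopped_prob_summable_eq:
  fixes A :: "'a set" and Q :: "'a list \<Rightarrow> bool"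
  assumes "x \<in> V"
  defines "f \<equiv> \<lambda>n. measure_pmf.prob (srw E x n) {p. first_hit A p \<and> Q p}"
  shows "summable f" and "ennreal (stopped_prob E A x Q) = paths_weight E {p \<in> hitting_paths A x. Q p}"
proof -
  have "ennreal (f n) = paths_weight E {p \<in> {p \<in> hitting_paths A x. Q p}. length p - 1 = n}" for n
  proof -
    have "{p \<in> {p. first_hit A p \<and> Q p}. length p = Suc n \<and> hd p = x}
        = {p \<in> {p \<in> hitting_paths A x. Q p}. length p - 1 = n}"
      by (auto simp: hitting_paths_def first_hit_def)
    then show ?thesis unfolding f_def using ennreal_prob_srw[OF assms(1), of n] by simp
  qed
  then have "(\<Sum>n. ennreal (f n))
      = infsum (\<lambda>n. paths_weight E {p \<in> {p \<in> hitting_paths A x. Q p}. length p - 1 = n}) UNIV"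
    by (simp add: suminf_eq_infsum_ennreal)
  also have "\<dots> = paths_weight E {p \<in> hitting_paths A x. Q p}"
    by (rule infsum_fibres_ennreal[symmetric]) simp
  finally have sum: "(\<Sum>n. ennreal (f n)) = paths_weight E {p \<in> hitting_paths A x. Q p}" .
  also have "\<dots> \<le> paths_weight E (hitting_paths A x)" by (rule infsum_mono_set_ennreal) auto
  also have "\<dots> \<le> 1" by (rule paths_weight_hitting_paths_le_1)
  finally have "(\<Sum>n. ennreal (f n)) \<noteq> top" by (auto simp: top_unique)
  then show "summable f" by (rule summable_suminf_not_top[rotated]) (simp add: f_def)
  then show "ennreal (stopped_prob E A x Q) = paths_weight E {p \<in> hitting_paths A x. Q p}"
    using sum suminf_ennreal2[of f] by (simp add: stopped_prob_def f_def)
qed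

lemma stopped_prob_nonneg: "x \<in> V \<Longrightarrow> stopped_prob E A x Q \<ge> 0"
  unfolding stopped_prob_def by (rule suminf_nonneg[OF stopped_prob_summable_eq(1)]) (simp_all add: measure_nonneg)

end

section \<open>Two branches of Wilson's algorithm\<close>

text \<open>The two branches produced by Wilson's algorithm rooted at A and started from a, then b:
  the loop-erased walk from a to A, then the loop-erased walk from b to A and the first
  branch. By Lawler's formula tree_weight is the probability of the pair.\<close>
definition two_branch_trees :: "'a set \<Rightarrow> 'a \<Rightarrow> 'a \<Rightarrow> ('a list \<times> 'a list) set" where
  "two_branch_trees A a b = Sigma (simple_hitting_paths A a) (\<lambda>l. simple_hitting_paths (A \<union> set l) b)"

definition tree_weight :: "('a \<Rightarrow> 'a \<Rightarrow> bool) \<Rightarrow> 'a set \<Rightarrow> 'a list \<times> 'a list \<Rightarrow> ennreal" where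
  "tree_weight E A t = walk_weight E (fst t) * green_prod E A (butlast (fst t))
     * (walk_weight E (snd t) * green_prod E (A \<union> set (fst t)) (butlast (snd t)))"

definition branches_meet :: "'a list \<times> 'a list \<Rightarrow> bool" where
  "branches_meet t \<longleftrightarrow> last (snd t) \<in> set (fst t)"

text \<open>Exchanging the roles of a and b: if the second branch ends at a vertex z of the first,
  the new first branch runs from b to z and on along the old first branch, and the new second
  branch is the old first branch up to z.\<close>
definition tree_swap :: "'a list \<times> 'a list \<Rightarrow> 'a list \<times> 'a list" where
  "tree_swap t = (let l1 = fst t; l2 = snd t; z = last l2 in
     if z \<in> set l1 then (butlast l2 @ dropWhile (\<lambda>v. v \<noteq> z) l1, takeWhile (\<lambda>v. v \<noteq> z) l1 @ [z])
     else (l2, l1))"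

lemma simple_hitting_paths_iff:
  "l \<in> simple_hitting_paths K z
    \<longleftrightarrow> l \<noteq> [] \<and> hd l = z \<and> last l \<in> K \<and> set (butlast l) \<inter> K = {} \<and> distinct l"
  by (auto simp: simple_hitting_paths_def hitting_paths_iff)

lemma tree_weight_eq:
  assumes "(l1, l2) \<in> two_branch_trees A a b"
  shows "tree_weight E A (l1, l2) = walk_weight E l1 * walk_weight E l2 * green_prod E A (butlast l1 @ butlast l2)"
proof -
  have "A \<union> set l1 = A \<union> set (butlast l1)"
    using assms set_butlast_last[of l1] by (auto simp: two_branch_trees_def simple_hitting_paths_iff)
  then show ?thesis by (simp add: tree_weight_def green_prod_append ac_simps)
qed

lemma takeWhile_neq_append_Cons: "z \<notin> set ys \<Longrightarrow> takeWhile (\<lambda>v. v \<noteq> z) (ys @ z # zs) = ys"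
  by (induction ys) auto

lemma dropWhile_neq_append_Cons: "z \<notin> set ys \<Longrightarrow> dropWhile (\<lambda>v. v \<noteq> z) (ys @ z # zs) = z # zs"
  by (induction ys) auto

lemma tree_swap_meeting:
  assumes t: "t \<in> two_branch_trees A a b" and meet: "branches_meet t"
  shows "tree_swap t \<in> two_branch_trees A b a" "tree_swap (tree_swap t) = t"
    "tree_weight E A (tree_swap t) = tree_weight E A t" "branches_meet (tree_swap t)"
    "last (fst (tree_swap t)) = last (fst t)"
proof -
  obtain l1 l2 where t_eq: "t = (l1, l2)" by (cases t)
  have l1: "l1 \<noteq> []" "hd l1 = a" "last l1 \<in> A" "set (butlast l1) \<inter> A = {}" "distinct l1"
    and l2: "l2 \<noteq> []" "hd l2 = b" "set (butlast l2) \<inter> (A \<union> set l1) = {}" "distinct l2"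
    using t t_eq by (auto simp: two_branch_trees_def simple_hitting_paths_iff)
  define z where "z = last l2"
  define bs where "bs = butlast l2"
  have l2_eq: "l2 = bs @ [z]" using l2(1) by (simp add: z_def bs_def)
  obtain ys zs where l1_eq: "l1 = ys @ z # zs"
    using meet t_eq by (metis branches_meet_def fst_conv snd_conv split_list z_def)
  have dist: "z \<notin> set ys" "z \<notin> set zs" "z \<notin> set bs" "set ys \<inter> set zs = {}"
    "distinct ys" "distinct zs" "distinct bs"
    using l1(5) l2(4) l1_eq l2_eq by auto
  have bs: "set bs \<inter> A = {}" "set bs \<inter> set ys = {}" "set bs \<inter> set zs = {}"
    using l2(3) l1_eq by (auto simp: bs_def)
  have swap: "tree_swap t = (bs @ z # zs, ys @ [z])"
    using t_eq l1_eq dist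
    by (simp add: tree_swap_def Let_def z_def[symmetric] bs_def[symmetric] takeWhile_neq_append_Cons dropWhile_neq_append_Cons)
  have butlast_l1: "butlast l1 = ys @ butlast (z # zs)" by (simp add: l1_eq butlast_append)
  have "bs @ z # zs \<in> simple_hitting_paths A b"
    using l1 l2 bs dist l1_eq l2_eq butlast_l1
    by (cases bs) (auto simp: simple_hitting_paths_iff butlast_append dest: in_set_butlastD)
  moreover have "ys @ [z] \<in> simple_hitting_paths (A \<union> set (bs @ z # zs)) a"
    using l1 bs dist l1_eq butlast_l1 by (cases ys) (auto simp: simple_hitting_paths_iff)
  ultimately show "tree_swap t \<in> two_branch_trees A b a" by (simp add: swap two_branch_trees_def)
  show "tree_swap (tree_swap t) = t"
    using swap t_eq l1_eq l2_eq dist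
    by (simp add: tree_swap_def Let_def takeWhile_neq_append_Cons dropWhile_neq_append_Cons)
  show "branches_meet (tree_swap t)" "last (fst (tree_swap t)) = last (fst t)"
    using swap t_eq l1_eq by (simp_all add: branches_meet_def)
  have "walk_weight E l1 * walk_weight E l2 = walk_weight E (bs @ z # zs) * walk_weight E (ys @ [z])"
    using walk_weight_glue[of "ys @ [z]" "z # zs" E] walk_weight_glue[of "bs @ [z]" "z # zs" E]
    by (simp add: l1_eq l2_eq ac_simps)
  moreover have "green_prod E A (butlast (bs @ z # zs) @ ys) = green_prod E A (butlast l1 @ bs)"
    using dist bs butlast_l1 distinct_butlast[of "z # zs"]
    by (intro green_prod_perm) (auto simp: butlast_append dest: in_set_butlastD)
  moreover note tree_weight_eq[OF \<open>tree_swap t \<in> two_branch_trees A b a\<close>[unfolded swap]]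
    tree_weight_eq[OF t[unfolded t_eq]]
  ultimately show "tree_weight E A (tree_swap t) = tree_weight E A t"
    unfolding swap by (simp add: t_eq bs_def[symmetric] mult.commute)
qed

lemma tree_swap_apart:
  assumes t: "t \<in> two_branch_trees A a b" and apart: "\<not> branches_meet t"
  shows "tree_swap t \<in> two_branch_trees A b a" "tree_swap (tree_swap t) = t"
    "tree_weight E A (tree_swap t) = tree_weight E A t" "\<not> branches_meet (tree_swap t)"
proof -
  obtain l1 l2 where t_eq: "t = (l1, l2)" by (cases t)
  have l1: "l1 \<noteq> []" "hd l1 = a" "last l1 \<in> A" "set (butlast l1) \<inter> A = {}" "distinct l1"
    and l2: "l2 \<noteq> []" "hd l2 = b" "last l2 \<in> A" "set (butlast l2) \<inter> (A \<union> set l1) = {}" "distinct l2"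
    using t t_eq apart by (auto simp: two_branch_trees_def simple_hitting_paths_iff branches_meet_def)
  have swap: "tree_swap t = (l2, l1)" using t_eq apart by (simp add: tree_swap_def branches_meet_def)
  have disj: "set l1 \<inter> set l2 = {}"
    using l1 l2 apart t_eq set_butlast_last[of l1] set_butlast_last[of l2]
    by (auto simp: branches_meet_def)
  have "l2 \<in> simple_hitting_paths A b" "l1 \<in> simple_hitting_paths (A \<union> set l2) a"
    using l1 l2 disj by (auto simp: simple_hitting_paths_iff dest: in_set_butlastD)
  then show mem: "tree_swap t \<in> two_branch_trees A b a" by (simp add: swap two_branch_trees_def)
  show "tree_swap (tree_swap t) = t" "\<not> branches_meet (tree_swap t)"
    using swap t_eq disj last_in_set[OF l1(1)] by (auto simp: tree_swap_def branches_meet_def Let_def)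
  have "green_prod E A (butlast l2 @ butlast l1) = green_prod E A (butlast l1 @ butlast l2)"
    using disj l1(5) l2(5) by (intro green_prod_perm) (auto simp: distinct_butlast dest: in_set_butlastD)
  then show "tree_weight E A (tree_swap t) = tree_weight E A t"
    using tree_weight_eq[OF mem[unfolded swap]] tree_weight_eq[OF t[unfolded t_eq]]
    unfolding swap by (simp add: t_eq mult.commute)
qed

lemma tree_swap_involution:
  assumes "t \<in> two_branch_trees A a b"
  shows "tree_swap t \<in> two_branch_trees A b a" "tree_swap (tree_swap t) = t"
    "tree_weight E A (tree_swap t) = tree_weight E A t" "branches_meet (tree_swap t) = branches_meet t"
  using tree_swap_meeting[OF assms] tree_swap_apart[OF assms] by blast+

lemma infsum_tree_swap:
  "infsum h (two_branch_trees A b a) = infsum (\<lambda>t. h (tree_swap t)) (two_branch_trees A a b)"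
  by (rule infsum_reindex_bij_witness[of _ tree_swap tree_swap, symmetric])
     (auto simp: tree_swap_involution)

section \<open>The total variation bound\<close>

lemma coupling_le:
  fixes w :: "'t \<Rightarrow> ennreal"
  assumes "\<And>t. t \<in> T \<Longrightarrow> J t \<Longrightarrow> P t = Q t"
  shows "infsum (\<lambda>t. w t * of_bool (P t)) T
    \<le> infsum (\<lambda>t. w t * of_bool (Q t)) T + infsum (\<lambda>t. w t * of_bool (\<not> J t)) T"
proof -
  have "infsum (\<lambda>t. w t * of_bool (P t)) T \<le> infsum (\<lambda>t. w t * of_bool (Q t) + w t * of_bool (\<not> J t)) T"
    using assms by (intro infsum_mono) (auto simp: of_bool_def)
  then show ?thesis by (simp add: infsum_add)
qed

lemma coupling_inequality:
  fixes w :: "'t \<Rightarrow> ennreal" and p q d :: real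
  assumes total: "infsum w T = 1" and agree: "\<And>t. t \<in> T \<Longrightarrow> J t \<Longrightarrow> P t = Q t"
    and p: "ennreal p = infsum (\<lambda>t. w t * of_bool (P t)) T" "0 \<le> p"
    and q: "ennreal q = infsum (\<lambda>t. w t * of_bool (Q t)) T" "0 \<le> q"
    and d: "ennreal d \<le> infsum (\<lambda>t. w t * of_bool (J t)) T"
  shows "\<bar>p - q\<bar> \<le> 1 - d"
proof -
  let ?j = "infsum (\<lambda>t. w t * of_bool (J t)) T" and ?n = "infsum (\<lambda>t. w t * of_bool (\<not> J t)) T"
  have "?j + ?n = infsum (\<lambda>t. w t * of_bool (J t) + w t * of_bool (\<not> J t)) T"
    by (simp add: infsum_add)
  also have "\<dots> = infsum w T" by (intro infsum_cong) simp
  also have "\<dots> = 1" by (rule total)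
  finally have split: "?j + ?n = 1" .
  then have "?j \<noteq> top" "?n \<noteq> top" using ennreal_add_eq_top[of ?j ?n] by auto
  then obtain j n where jn: "?j = ennreal j" "?n = ennreal n" "0 \<le> j" "0 \<le> n"
    by (cases ?j rule: ennreal_cases; cases ?n rule: ennreal_cases) auto
  have "j + n = 1"
    using split jn by (simp add: ennreal_plus[symmetric] del: ennreal_plus)
  moreover have "ennreal p \<le> ennreal (q + n)" "ennreal q \<le> ennreal (p + n)"
    using coupling_le[of T J P Q w] coupling_le[of T J Q P w] agree p q jn by (auto simp: ennreal_plus)
  then have "p \<le> q + n" "q \<le> p + n"
    using p(2) q(2) jn(4) by (simp_all only: ennreal_le_iff add_nonneg_nonneg)
  moreover have "d \<le> j"
    using d jn(1,3) by (auto simp: ennreal_le_iff2)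
  ultimately show ?thesis by linarith
qed

locale hitting_walk_graph = walk_graph +
  fixes A :: "'a set"
  assumes hits: "\<And>v. v \<in> V \<Longrightarrow> paths_weight E (hitting_paths A v) = 1"
begin

lemma paths_weight_hitting_paths_superset:
  assumes "A \<subseteq> K" "z \<in> V"
  shows "paths_weight E (hitting_paths K z) = 1"
proof -
  have "1 = paths_weight E (hitting_paths A z)" using hits[OF assms(2)] by simp
  also have "\<dots> = infsum (\<lambda>q. walk_weight E q * paths_weight E (hitting_paths A (last q))) (hitting_paths K z)"
    unfolding hitting_paths_eq_glue[OF assms(1), of z]
    by (rule paths_weight_glue) (auto simp: hitting_paths_iff inj_on_glue_hitting_paths)
  also have "\<dots> = paths_weight E (hitting_paths K z)"
  proof (rule infsum_cong)
    fix q assume q: "q \<in> hitting_paths K z"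
    show "walk_weight E q * paths_weight E (hitting_paths A (last q)) = walk_weight E q"
    proof (cases "walk_weight E q = 0")
      case False
      then have "last q \<in> V"
        using q assms(2) walk_weight_nonzero_imp_successively last_in_V by (auto simp: hitting_paths_iff)
      then show ?thesis using hits by simp
    qed simp
  qed
  finally show ?thesis by simp
qed

lemma infsum_simple_hitting_paths_eq_1:
  assumes "A \<subseteq> K" "b \<in> V"
  shows "infsum (\<lambda>l. walk_weight E l * green_prod E K (butlast l)) (simple_hitting_paths K b) = 1"
  using infsum_loop_erase[of E "\<lambda>_. 1" K b] paths_weight_hitting_paths_superset[OF assms] by simp

text \<open>The first branch of a two-branch tree is the loop erasure of the walk from a, and its
  endpoint is the point where that walk hits A.\<close>
lemma infsum_two_branch_trees_first_branch:
  assumes "b \<in> V"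
  shows "infsum (\<lambda>t. tree_weight E A t * f (last (fst t))) (two_branch_trees A a b)
    = infsum (\<lambda>g. walk_weight E g * f (last g)) (hitting_paths A a)"
proof -
  have "infsum (\<lambda>t. tree_weight E A t * f (last (fst t))) (two_branch_trees A a b)
      = infsum (\<lambda>l1. walk_weight E l1 * green_prod E A (butlast l1) * f (last l1)
          * infsum (\<lambda>l2. walk_weight E l2 * green_prod E (A \<union> set l1) (butlast l2))
              (simple_hitting_paths (A \<union> set l1) b)) (simple_hitting_paths A a)"
    unfolding two_branch_trees_def
    by (simp add: infsum_Sigma_ennreal tree_weight_def infsum_cmult_right_ennreal[symmetric] ac_simps)
  also have "\<dots> = infsum (\<lambda>l1. walk_weight E l1 * green_prod E A (butlast l1) * f (last l1))
      (simple_hitting_paths A a)"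
    using infsum_simple_hitting_paths_eq_1[OF _ assms] by simp
  also have "\<dots> = infsum (\<lambda>g. walk_weight E g * f (last (loop_erase g))) (hitting_paths A a)"
    by (rule infsum_loop_erase[symmetric])
  also have "\<dots> = infsum (\<lambda>g. walk_weight E g * f (last g)) (hitting_paths A a)"
    by (intro infsum_cong) (simp add: hitting_paths_iff last_loop_erase)
  finally show ?thesis .
qed

lemma paths_weight_disconnecting_le_meet:
  assumes "y \<in> V"
  shows "paths_weight E {g \<in> hitting_paths A x. disconnects E (set g) y A}
    \<le> infsum (\<lambda>t. tree_weight E A t * of_bool (branches_meet t)) (two_branch_trees A y x)"
proof -
  let ?D = "paths_weight E {g \<in> hitting_paths A x. disconnects E (set g) y A}"
  define meet where "meet m = infsum (\<lambda>l. walk_weight E l * green_prod E (A \<union> set m) (butlast l)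
    * of_bool (last l \<in> set m)) (simple_hitting_paths (A \<union> set m) x)" for m
  have "?D = infsum (\<lambda>h. walk_weight E h * ?D) (hitting_paths A y)"
    using hits[OF assms] by (simp add: infsum_cmult_left_ennreal)
  also have "\<dots> \<le> infsum (\<lambda>h. walk_weight E h * meet (loop_erase h)) (hitting_paths A y)"
  proof (rule infsum_mono)
    fix h assume h: "h \<in> hitting_paths A y"
    show "walk_weight E h * ?D \<le> walk_weight E h * meet (loop_erase h)"
    proof (cases "walk_weight E h = 0")
      case False
      then have "gpath E (loop_erase h)"
        using walk_weight_nonzero_imp_successively[OF False] successively_loop_erase[of E h]
        by (simp add: gpath_iff)
      moreover have "hd (loop_erase h) = y" "last (loop_erase h) \<in> A"
        using h by (auto simp: hitting_paths_iff hd_loop_erase last_loop_erase)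
      ultimately show ?thesis
        unfolding meet_def by (intro mult_left_mono paths_weight_disconnecting_le) simp_all
    qed simp
  qed simp_all
  also have "\<dots> = infsum (\<lambda>m. walk_weight E m * green_prod E A (butlast m) * meet m) (simple_hitting_paths A y)"
    by (rule infsum_loop_erase)
  also have "\<dots> = infsum (\<lambda>t. tree_weight E A t * of_bool (branches_meet t)) (two_branch_trees A y x)"
    unfolding two_branch_trees_def meet_def
    by (simp add: infsum_Sigma_ennreal infsum_cmult_right_ennreal[symmetric] tree_weight_def
        branches_meet_def ac_simps)
  finally show ?thesis .
qed

lemma ennreal_hit_law_eq_infsum_trees:
  assumes "a \<in> V" "b \<in> V"
  shows "ennreal (hit_law E A a B) = infsum (\<lambda>t. tree_weight E A t * of_bool (last (fst t) \<in> B)) (two_branch_trees A a b)"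
  unfolding hit_law_def stopped_prob_summable_eq(2)[OF assms(1)] infsum_Collect_ennreal
  by (rule infsum_two_branch_trees_first_branch[OF assms(2), symmetric])

lemma hit_law_diff_le:
  assumes x: "x \<in> V" and y: "y \<in> V"
  shows "\<bar>hit_law E A x B - hit_law E A y B\<bar> \<le> 1 - stopped_prob E A x (\<lambda>p. disconnects E (set p) y A)"
proof (rule coupling_inequality)
  let ?T = "two_branch_trees A x y"
  show "infsum (tree_weight E A) ?T = 1"
    using infsum_two_branch_trees_first_branch[OF y, where a=x and f="\<lambda>_. 1"] hits[OF x] by simp
  show "ennreal (hit_law E A x B) = infsum (\<lambda>t. tree_weight E A t * of_bool (last (fst t) \<in> B)) ?T"
    by (rule ennreal_hit_law_eq_infsum_trees[OF x y])
  show "ennreal (hit_law E A y B)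
    = infsum (\<lambda>t. tree_weight E A t * of_bool (last (fst (tree_swap t)) \<in> B)) ?T"
    unfolding ennreal_hit_law_eq_infsum_trees[OF y x] infsum_tree_swap[of _ A y x]
    by (intro infsum_cong) (simp add: tree_swap_involution)
  have "ennreal (stopped_prob E A x (\<lambda>p. disconnects E (set p) y A))
      \<le> infsum (\<lambda>t. tree_weight E A t * of_bool (branches_meet t)) (two_branch_trees A y x)"
    unfolding stopped_prob_summable_eq(2)[OF x] by (rule paths_weight_disconnecting_le_meet[OF y])
  also have "\<dots> = infsum (\<lambda>t. tree_weight E A t * of_bool (branches_meet t)) ?T"
    unfolding infsum_tree_swap[of _ A y x] by (intro infsum_cong) (simp add: tree_swap_involution)
  finally show "ennreal (stopped_prob E A x (\<lambda>p. disconnects E (set p) y A))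
      \<le> infsum (\<lambda>t. tree_weight E A t * of_bool (branches_meet t)) ?T" .
  show "last (fst t) \<in> B \<longleftrightarrow> last (fst (tree_swap t)) \<in> B" if "t \<in> ?T" "branches_meet t" for t
    using tree_swap_meeting(5)[OF that] by simp
qed (simp_all add: hit_law_def stopped_prob_nonneg x y)

end

lemma nbrs_nonempty_if_connected:
  assumes conn: "\<And>u v. u \<in> V \<Longrightarrow> v \<in> V \<Longrightarrow> E\<^sup>*\<^sup>* u v"
    and "a \<in> V" "b \<in> V" "a \<noteq> b" "v \<in> V"
  shows "nbrs E v \<noteq> {}"
proof -
  obtain w where w: "w \<in> V" "w \<noteq> v"
  proof (cases "v = a")
    case True
    then show ?thesis using assms(3,4) by (intro that[of b]) auto
  qed (use assms(2) in blast)
  then have "E\<^sup>*\<^sup>* v w" using conn assms(5) by blast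
  then show ?thesis using w(2) by (induction rule: converse_rtranclp_induct) (auto simp: nbrs_def)
qed

lemma stopped_prob_empty: "stopped_prob E {} x Q = 0"
  by (simp add: stopped_prob_def first_hit_def)

theorem lemma3p12:
  fixes V :: "'a set" and E :: "'a \<Rightarrow> 'a \<Rightarrow> bool" and A :: "'a set" and x y :: 'a
  assumes edges: "\<And>u v. E u v \<Longrightarrow> u \<in> V \<and> v \<in> V"
    and sym: "\<And>u v. E u v \<Longrightarrow> E v u"
    and irrefl: "\<And>v. \<not> E v v"
    and locfin: "\<And>v. v \<in> V \<Longrightarrow> finite (nbrs E v)"
    and conn: "\<And>u v. u \<in> V \<Longrightarrow> v \<in> V \<Longrightarrow> E\<^sup>*\<^sup>* u v"
    and AV: "A \<subseteq> V"
    and hits: "\<And>v. v \<in> V \<Longrightarrow> stopped_prob E A v (\<lambda>_. True) = 1"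
    and x: "x \<in> V - A" and y: "y \<in> V - A"
  shows "dTV_hit E A x y \<le> 1 - stopped_prob E A x (\<lambda>p. disconnects E (set p) y A)"
proof -
  have "A \<noteq> {}"
    using hits[of x] x stopped_prob_empty[of E x] by auto
  then obtain a where a: "a \<in> A" by blast
  interpret walk_graph V E
  proof
    show "nbrs E v \<noteq> {}" if "v \<in> V" for v
      using nbrs_nonempty_if_connected[OF conn _ _ _ that, of a x] a AV x by auto
  qed (use edges locfin in auto)
  interpret hitting_walk_graph V E A
  proof
    fix v assume "v \<in> V"
    then show "paths_weight E (hitting_paths A v) = 1"
      using hits stopped_prob_summable_eq(2)[of v A "\<lambda>_. True"] by simp
  qed
  show ?thesis
    unfolding dTV_hit_def
  proof (rule cSUP_least)
    show "\<bar>hit_law E A x B - hit_law E A y B\<bar> \<le> 1 - stopped_prob E A x (\<lambda>p. disconnects E (set p) y A)" for B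
      using x y by (intro hit_law_diff_le) simp_all
  qed simp
qed

end
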